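(* Let $G$ be a finite simple graph with an initial configuration and let $u,v$ be adjacent vertices with $\deg(u)=2$ and $\deg(v)\in\{1,2\}$. Then for every integer $t\geq0$, $|c_{t+1}(u)-c_{t+1}(v)|\leq \max\{3,\ |c_t(u)-c_t(v)|\}$.
   Context: Diffusion process: for a configuration $c_t:V(G)\to\mathbb{Z}$, $c_{t+1}(w)=c_t(w)-|\{x\in N(w): c_t(w)>c_t(x)\}|+|\{x\in N(w): c_t(w)<c_t(x)\}|$ for all $w$ simultaneously. *)

theory Defs
  imports Main
begin

definition simple_graph :: "'a set \<Rightarrow> ('a \<Rightarrow> 'a \<Rightarrow> bool) \<Rightarrow> bool" where
  "simple_graph V E \<longleftrightarrow> finite V \<and> (\<forall>x y. E x y \<longrightarrow> x \<in> V \<and> y \<in> V)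
     \<and> (\<forall>x y. E x y \<longrightarrow> E y x) \<and> (\<forall>x. \<not> E x x)"

definition nbhd :: "'a set \<Rightarrow> ('a \<Rightarrow> 'a \<Rightarrow> bool) \<Rightarrow> 'a \<Rightarrow> 'a set" where
  "nbhd V E w = {x \<in> V. E w x}"

definition degree :: "'a set \<Rightarrow> ('a \<Rightarrow> 'a \<Rightarrow> bool) \<Rightarrow> 'a \<Rightarrow> nat" where
  "degree V E w = card (nbhd V E w)"

definition diffusion_step :: "'a set \<Rightarrow> ('a \<Rightarrow> 'a \<Rightarrow> bool) \<Rightarrow> ('a \<Rightarrow> int) \<Rightarrow> ('a \<Rightarrow> int)" where
  "diffusion_step V E c = (\<lambda>w. c w
      - int (card {x \<in> nbhd V E w. c w > c x})
      + int (card {x \<in> nbhd V E w. c w < c x}))"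

definition config :: "'a set \<Rightarrow> ('a \<Rightarrow> 'a \<Rightarrow> bool) \<Rightarrow> ('a \<Rightarrow> int) \<Rightarrow> nat \<Rightarrow> ('a \<Rightarrow> int)" where
  "config V E c0 t = (diffusion_step V E ^^ t) c0"

end

theory Submission
  imports Defs
begin

text \<open>Across an edge uv with c(u) > c(v), vertex u loses one unit to v and v gains one from u,
  and every other neighbour moves each endpoint by at most one unit. With deg u + deg v \<le> 4 the
  difference d = c(u) - c(v) therefore moves into [d - 4, d], and |d - 4| \<le> 3 for d \<ge> 1; for
  d = 0 the two endpoints move by at most deg - 1 each, giving |d'| \<le> 2.\<close>

lemma finite_nbhd: "finite V \<Longrightarrow> finite (nbhd V E w)"
  by (simp add: nbhd_def)

lemma diffusion_step_uminus:
  "diffusion_step V E (\<lambda>x. - c x) w = - diffusion_step V E c w"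
  by (simp add: diffusion_step_def)

lemma degree_eq_card_higher_lower_equal:
  fixes c :: "'a \<Rightarrow> int"
  assumes "finite V"
  shows "degree V E w = card {x \<in> nbhd V E w. c w < c x} + card {x \<in> nbhd V E w. c x < c w}
           + card {x \<in> nbhd V E w. c x = c w}"
proof -
  let ?hi = "{x \<in> nbhd V E w. c w < c x}" and ?lo = "{x \<in> nbhd V E w. c x < c w}"
    and ?eq = "{x \<in> nbhd V E w. c x = c w}"
  have fin: "finite (nbhd V E w)" using assms by (rule finite_nbhd)
  have split: "nbhd V E w = (?hi \<union> ?lo) \<union> ?eq" by auto
  have "card (?hi \<union> ?lo) = card ?hi + card ?lo"
    using fin by (intro card_Un_disjoint) auto
  moreover have "card ((?hi \<union> ?lo) \<union> ?eq) = card (?hi \<union> ?lo) + card ?eq"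
    using fin by (intro card_Un_disjoint) auto
  ultimately show ?thesis unfolding degree_def by (subst split) simp
qed

lemma card_nbhd_filter_pos:
  "finite V \<Longrightarrow> x \<in> nbhd V E w \<Longrightarrow> P x \<Longrightarrow> card {y \<in> nbhd V E w. P y} \<ge> 1"
  using finite_nbhd[of V E w] by (auto simp: Suc_le_eq card_gt_0_iff)

lemma diffusion_step_bounded:
  fixes c :: "'a \<Rightarrow> int"
  assumes "finite V"
  shows "\<bar>diffusion_step V E c w - c w\<bar> \<le> int (degree V E w)"
  using degree_eq_card_higher_lower_equal[OF assms, of E w c]
  by (simp add: diffusion_step_def)

lemma diffusion_step_le_of_equal_neighbour:
  fixes c :: "'a \<Rightarrow> int"
  assumes "finite V" "x \<in> nbhd V E w" "c x = c w"
  shows "diffusion_step V E c w \<le> c w + int (degree V E w) - 1"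
  using degree_eq_card_higher_lower_equal[OF assms(1), of E w c]
    card_nbhd_filter_pos[OF assms(1,2), of "\<lambda>y. c y = c w"] assms(3)
  by (simp add: diffusion_step_def)

lemma diffusion_step_le_of_lower_neighbour:
  fixes c :: "'a \<Rightarrow> int"
  assumes "finite V" "x \<in> nbhd V E w" "c x < c w"
  shows "diffusion_step V E c w \<le> c w + int (degree V E w) - 2"
  using degree_eq_card_higher_lower_equal[OF assms(1), of E w c]
    card_nbhd_filter_pos[OF assms(1,2), of "\<lambda>y. c y < c w"] assms(3)
  by (simp add: diffusion_step_def)

lemma diffusion_step_edge_ordered:
  fixes c :: "'a \<Rightarrow> int"
  assumes fin: "finite V" and nb: "u \<in> nbhd V E v" "v \<in> nbhd V E u"
    and deg: "degree V E u + degree V E v \<le> 4"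
    and "c v \<le> c u"
  shows "\<bar>diffusion_step V E c u - diffusion_step V E c v\<bar> \<le> max 3 \<bar>c u - c v\<bar>"
proof -
  let ?c' = "diffusion_step V E c" and ?neg = "\<lambda>x. - c x"
  define du dv where "du = int (degree V E u)" and "dv = int (degree V E v)"
  have "du + dv \<le> 4" using deg by (simp add: du_def dv_def)
  \<comment> \<open>lower bounds on the new values are upper bounds for the negated configuration\<close>
  have neg_step: "?c' w = - diffusion_step V E ?neg w" for w
    by (simp add: diffusion_step_uminus)
  show ?thesis
  proof (cases "c v = c u")
    case True
    have "?c' u \<le> c u + du - 1" "?c' v \<le> c v + dv - 1"
      "diffusion_step V E ?neg u \<le> - c u + du - 1" "diffusion_step V E ?neg v \<le> - c v + dv - 1"
      using diffusion_step_le_of_equal_neighbour[OF fin nb(2), of c]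
        diffusion_step_le_of_equal_neighbour[OF fin nb(1), of c]
        diffusion_step_le_of_equal_neighbour[OF fin nb(2), of ?neg]
        diffusion_step_le_of_equal_neighbour[OF fin nb(1), of ?neg] True
      unfolding du_def dv_def by auto
    then show ?thesis using \<open>du + dv \<le> 4\<close> True neg_step[of u] neg_step[of v] by auto
  next
    case False
    then have "c v < c u" using \<open>c v \<le> c u\<close> by simp
    have "?c' u \<le> c u + du - 2" "diffusion_step V E ?neg v \<le> - c v + dv - 2"
      using diffusion_step_le_of_lower_neighbour[OF fin nb(2), of c]
        diffusion_step_le_of_lower_neighbour[OF fin nb(1), of ?neg] \<open>c v < c u\<close>
      unfolding du_def dv_def by auto
    moreover have "\<bar>?c' u - c u\<bar> \<le> du" "\<bar>?c' v - c v\<bar> \<le> dv"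
      using fin unfolding du_def dv_def by (auto intro: diffusion_step_bounded)
    ultimately show ?thesis using \<open>du + dv \<le> 4\<close> \<open>c v < c u\<close> neg_step[of v] by auto
  qed
qed

lemma diffusion_step_edge:
  fixes c :: "'a \<Rightarrow> int"
  assumes "finite V" "u \<in> nbhd V E v" "v \<in> nbhd V E u"
    and "degree V E u + degree V E v \<le> 4"
  shows "\<bar>diffusion_step V E c u - diffusion_step V E c v\<bar> \<le> max 3 \<bar>c u - c v\<bar>"
proof (cases "c v \<le> c u")
  case True
  then show ?thesis by (rule diffusion_step_edge_ordered[OF assms])
next
  case False
  have "degree V E v + degree V E u \<le> 4" using assms(4) by simp
  with False have "\<bar>diffusion_step V E c v - diffusion_step V E c u\<bar> \<le> max 3 \<bar>c v - c u\<bar>"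
    by (intro diffusion_step_edge_ordered[OF assms(1,3,2)]) auto
  then show ?thesis by (simp add: abs_minus_commute)
qed

theorem lemma6:
  fixes V :: "'a set" and E :: "'a \<Rightarrow> 'a \<Rightarrow> bool" and c0 :: "'a \<Rightarrow> int"
    and u v :: 'a and t :: nat
  assumes "simple_graph V E"
    and "E u v"
    and "degree V E u = 2"
    and "degree V E v \<in> {1, 2}"
  shows "\<bar>config V E c0 (Suc t) u - config V E c0 (Suc t) v\<bar>
           \<le> max 3 \<bar>config V E c0 t u - config V E c0 t v\<bar>"
proof -
  have "finite V" "u \<in> nbhd V E v" "v \<in> nbhd V E u"
    using assms(1,2) by (auto simp: simple_graph_def nbhd_def)
  moreover have "degree V E u + degree V E v \<le> 4" using assms(3,4) by auto
  moreover have "config V E c0 (Suc t) = diffusion_step V E (config V E c0 t)"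
    by (simp add: config_def)
  ultimately show ?thesis by (simp add: diffusion_step_edge)
qed

end
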